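(* If $\{\mathcal P_1,\dots,\mathcal P_r\}$ is a $(v,\{k_1,\dots,k_r\})$-MOHS on a half-set $V$, then $k_1+\dots+k_r-r\le v-1$, and equality holds if and only if the associated Heffter space $(V,\bigcup_{i=1}^r\mathcal P_i)$ is a linear space, i.e. every two distinct points of $V$ lie in exactly one block of $\bigcup_i\mathcal P_i$.
   Context: A half-set of an abelian group $G$ of odd order $2v+1\ge7$ is a subset $V\subseteq G\setminus\{0\}$ containing exactly one element of each pair $\{g,-g\}$, $g\ne0$. A $(v,k)$ Heffter system on $V$ is a partition of $V$ into blocks of size $k$, each summing to $0$ in $G$. Two Heffter systems on the same half-set are orthogonal if every block of one meets every block of the other in at most one element. A $(v,\{k_1,\dots,k_r\})$-MOHS is a set of pairwise orthogonal Heffter systems $\mathcal P_1,\dots,\mathcal P_r$ on a common half-set of an abelian group of order $2v+1$, with $\mathcal P_i$ a $(v,k_i)$ Heffter system. *)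

theory Defs
  imports Main
begin

definition half_set :: "'a::ab_group_add set \<Rightarrow> bool" where
  "half_set V \<longleftrightarrow> V \<subseteq> UNIV - {0} \<and>
     (\<forall>g. g \<noteq> 0 \<longrightarrow> ((g \<in> V) \<noteq> (- g \<in> V)))"

definition heffter_system :: "'a::ab_group_add set \<Rightarrow> nat \<Rightarrow> 'a set set \<Rightarrow> bool" where
  "heffter_system V k P \<longleftrightarrow>
     \<Union>P = V \<and> {} \<notin> P \<and>
     (\<forall>B\<in>P. \<forall>C\<in>P. B \<noteq> C \<longrightarrow> B \<inter> C = {}) \<and>
     (\<forall>B\<in>P. finite B \<and> card B = k \<and> \<Sum>B = 0)"

definition orthogonal_hs :: "'a set set \<Rightarrow> 'a set set \<Rightarrow> bool" where
  "orthogonal_hs P Q \<longleftrightarrow> (\<forall>B\<in>P. \<forall>C\<in>Q. card (B \<inter> C) \<le> 1)"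

text \<open>A (v,{k_0,...,k_(r-1)})-MOHS on the half-set V, indexed by i < r.\<close>
definition MOHS :: "nat \<Rightarrow> 'a::{ab_group_add,finite} set \<Rightarrow> nat \<Rightarrow> (nat \<Rightarrow> nat) \<Rightarrow> (nat \<Rightarrow> 'a set set) \<Rightarrow> bool" where
  "MOHS v V r k P \<longleftrightarrow> card (UNIV :: 'a set) = 2 * v + 1 \<and> half_set V \<and>
     (\<forall>i<r. heffter_system V (k i) (P i)) \<and>
     (\<forall>i<r. \<forall>j<r. i \<noteq> j \<longrightarrow> orthogonal_hs (P i) (P j))"

definition linear_space :: "'a set \<Rightarrow> 'a set set \<Rightarrow> bool" where
  "linear_space V \<B> \<longleftrightarrow> (\<forall>x\<in>V. \<forall>y\<in>V. x \<noteq> y \<longrightarrow> (\<exists>!B. B \<in> \<B> \<and> x \<in> B \<and> y \<in> B))"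

end

theory Submission
  imports Defs
begin

text \<open>Fix a point x of V. Each system has exactly one block through x, and by orthogonality
  these blocks pairwise meet only in x, so together they join x to exactly
  \<open>\<Sum>i. (k i - 1)\<close> of the v - 1 other points. This bounds the sum, and equality says that
  x is joined to every other point. The count does not depend on x, so equality at one
  point gives it at all points, which is the linear space property: a joining block is
  automatically unique, inside one system because it is a partition and across systems
  by orthogonality.\<close>

lemma card_half_set:
  fixes V :: "'a::{ab_group_add,finite} set"
  assumes "half_set V"
  shows "2 * card V + 1 = card (UNIV :: 'a set)"
proof -
  have nonzero: "0 \<notin> V" and sign: "\<And>g. g \<noteq> 0 \<Longrightarrow> g \<in> V \<longleftrightarrow> - g \<notin> V"
    using assms unfolding half_set_def by blast+
  have disjoint: "V \<inter> uminus ` V = {}"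
    using nonzero sign by force
  have "V \<union> uminus ` V = UNIV - {0}"
  proof (intro equalityI subsetI)
    fix g assume "g \<in> V \<union> uminus ` V"
    then show "g \<in> UNIV - {0}"
      using nonzero by (auto simp: neg_equal_0_iff_equal)
  next
    fix g :: 'a assume "g \<in> UNIV - {0}"
    then have "g \<in> V \<or> - g \<in> V"
      using sign by blast
    then show "g \<in> V \<union> uminus ` V"
      by (metis UnI1 UnI2 image_eqI minus_minus)
  qed
  then have "card (UNIV - {0 :: 'a}) = card V + card (uminus ` V)"
    using disjoint by (metis card_Un_disjoint finite)
  also have "card (uminus ` V) = card V"
    by (rule card_image) (simp add: inj_on_def)
  finally show ?thesis
    using card_gt_0_iff[of "UNIV :: 'a set"] by (simp add: card_Diff_singleton)
qed

lemma heffter_system_block_exists: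
  assumes "heffter_system V k P" and "x \<in> V"
  shows "\<exists>B\<in>P. x \<in> B"
  using assms unfolding heffter_system_def by blast

lemma heffter_system_block_unique:
  assumes "heffter_system V k P" and "B \<in> P" and "C \<in> P" and "x \<in> B" and "x \<in> C"
  shows "B = C"
  using assms unfolding heffter_system_def by blast

lemma heffter_system_block_subset:
  assumes "heffter_system V k P" and "B \<in> P"
  shows "B \<subseteq> V"
  using assms unfolding heffter_system_def by blast

lemma heffter_system_block_card:
  assumes "heffter_system V k P" and "B \<in> P"
  shows "finite B" and "card B = k"
  using assms unfolding heffter_system_def by auto

lemma orthogonal_hs_meet:
  assumes "orthogonal_hs P Q" and "B \<in> P" and "C \<in> Q" and "finite B"
    and "x \<in> B \<inter> C" and "y \<in> B \<inter> C"
  shows "x = y"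
proof -
  have "card (B \<inter> C) \<le> 1"
    using assms(1-3) unfolding orthogonal_hs_def by blast
  then show ?thesis
    using assms(4-6) by (auto simp: card_le_Suc0_iff_eq)
qed

definition partial_linear_space :: "'a set set \<Rightarrow> bool" where
  "partial_linear_space \<B> \<longleftrightarrow>
     (\<forall>B\<in>\<B>. \<forall>C\<in>\<B>. \<forall>x y. x \<noteq> y \<and> x \<in> B \<inter> C \<and> y \<in> B \<inter> C \<longrightarrow> B = C)"

lemma linear_space_iff_covering:
  assumes "partial_linear_space \<B>"
  shows "linear_space V \<B> \<longleftrightarrow> (\<forall>x\<in>V. V - {x} \<subseteq> \<Union>{B\<in>\<B>. x \<in> B})"
  using assms unfolding linear_space_def partial_linear_space_def by blast

lemma partial_linear_space_orthogonal_heffter_systems: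
  assumes hs: "\<forall>i\<in>I. heffter_system V (k i) (P i)"
    and orth: "\<forall>i\<in>I. \<forall>j\<in>I. i \<noteq> j \<longrightarrow> orthogonal_hs (P i) (P j)"
  shows "partial_linear_space (\<Union>i\<in>I. P i)"
  unfolding partial_linear_space_def
proof (intro ballI allI impI)
  fix B C x y
  assume "B \<in> (\<Union>i\<in>I. P i)" "C \<in> (\<Union>i\<in>I. P i)"
    and xy: "x \<noteq> y \<and> x \<in> B \<inter> C \<and> y \<in> B \<inter> C"
  then obtain i j where ij: "i \<in> I" "j \<in> I" "B \<in> P i" "C \<in> P j"
    by blast
  show "B = C"
  proof (cases "i = j")
    case True
    then show ?thesis
      using heffter_system_block_unique[OF bspec[OF hs \<open>i \<in> I\<close>] \<open>B \<in> P i\<close>] ij xy by blast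
  next
    case False
    then have "x = y"
      using orthogonal_hs_meet[OF orth[rule_format, OF ij(1,2) False] ij(3,4)]
        heffter_system_block_card(1)[OF bspec[OF hs ij(1)] ij(3)] ij xy by blast
    then show ?thesis
      using xy by blast
  qed
qed

lemma card_points_joined:
  fixes V :: "'a::{ab_group_add,finite} set"
  assumes hs: "\<forall>i\<in>I. heffter_system V (k i) (P i)"
    and orth: "\<forall>i\<in>I. \<forall>j\<in>I. i \<noteq> j \<longrightarrow> orthogonal_hs (P i) (P j)"
    and I: "finite I" and x: "x \<in> V"
  shows "card (\<Union>{B\<in>(\<Union>i\<in>I. P i). x \<in> B} - {x}) + card I = (\<Sum>i\<in>I. k i)"
proof -
  have "\<forall>i\<in>I. \<exists>B. B \<in> P i \<and> x \<in> B"
  proof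
    fix i assume "i \<in> I"
    then show "\<exists>B. B \<in> P i \<and> x \<in> B"
      using heffter_system_block_exists[OF bspec[OF hs \<open>i \<in> I\<close>] x] by blast
  qed
  then obtain Bx where "\<forall>i\<in>I. Bx i \<in> P i \<and> x \<in> Bx i"
    by (rule bchoice[THEN exE])
  then have Bx: "Bx i \<in> P i \<and> x \<in> Bx i" if "i \<in> I" for i
    using that by blast
  have size: "finite (Bx i)" "card (Bx i) = k i" if "i \<in> I" for i
    using heffter_system_block_card[OF bspec[OF hs that]] Bx[OF that] by blast+
  have "\<Union>{B\<in>(\<Union>i\<in>I. P i). x \<in> B} = (\<Union>i\<in>I. Bx i)"
  proof (intro equalityI subsetI)
    fix y assume "y \<in> \<Union>{B\<in>(\<Union>i\<in>I. P i). x \<in> B}"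
    then obtain i B where "i \<in> I" "B \<in> P i" "x \<in> B" "y \<in> B"
      by blast
    moreover from this have "B = Bx i"
      using heffter_system_block_unique[OF bspec[OF hs \<open>i \<in> I\<close>]] Bx by blast
    ultimately show "y \<in> (\<Union>i\<in>I. Bx i)"
      by blast
  qed (use Bx in blast)
  then have joined: "\<Union>{B\<in>(\<Union>i\<in>I. P i). x \<in> B} - {x} = (\<Union>i\<in>I. Bx i - {x})"
    by blast
  have "(Bx i - {x}) \<inter> (Bx j - {x}) = {}" if "i \<in> I" "j \<in> I" "i \<noteq> j" for i j
    using orthogonal_hs_meet[OF orth[rule_format, OF that]] Bx size that by blast
  then have "card (\<Union>i\<in>I. Bx i - {x}) = (\<Sum>i\<in>I. card (Bx i - {x}))"
    using I size by (intro card_UN_disjoint) auto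
  also have "\<dots> + card I = (\<Sum>i\<in>I. card (Bx i - {x}) + 1)"
    unfolding sum.distrib by simp
  also have "\<dots> = (\<Sum>i\<in>I. k i)"
  proof (rule sum.cong[OF refl])
    fix i assume "i \<in> I"
    then show "card (Bx i - {x}) + 1 = k i"
      using card_Suc_Diff1[of "Bx i" x] Bx size by (metis Suc_eq_plus1)
  qed
  finally show ?thesis
    unfolding joined .
qed

lemma orthogonal_heffter_systems_point_count:
  fixes V :: "'a::{ab_group_add,finite} set"
  assumes hs: "\<forall>i\<in>I. heffter_system V (k i) (P i)"
    and orth: "\<forall>i\<in>I. \<forall>j\<in>I. i \<noteq> j \<longrightarrow> orthogonal_hs (P i) (P j)"
    and I: "finite I" and x: "x \<in> V"
  shows "(\<Sum>i\<in>I. int (k i)) - int (card I) \<le> int (card V) - 1"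
    and "(\<Sum>i\<in>I. int (k i)) - int (card I) = int (card V) - 1 \<longleftrightarrow> V - {x} \<subseteq> \<Union>{B\<in>(\<Union>i\<in>I. P i). x \<in> B}"
proof -
  let ?N = "\<Union>{B\<in>(\<Union>i\<in>I. P i). x \<in> B} - {x}"
  have sub: "?N \<subseteq> V - {x}"
    using heffter_system_block_subset[OF bspec[OF hs]] by blast
  then have le: "card ?N \<le> card (V - {x})"
    by (simp add: card_mono)
  have "card ?N = card (V - {x}) \<longleftrightarrow> ?N = V - {x}"
    using card_subset_eq[OF _ sub] by auto
  also have "\<dots> \<longleftrightarrow> V - {x} \<subseteq> \<Union>{B\<in>(\<Union>i\<in>I. P i). x \<in> B}"
    using sub by blast
  finally have eq: "card ?N = card (V - {x}) \<longleftrightarrow> V - {x} \<subseteq> \<Union>{B\<in>(\<Union>i\<in>I. P i). x \<in> B}" .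
  have "card V \<ge> 1"
    using x card_0_eq[of V] by fastforce
  then have "int (card (V - {x})) = int (card V) - 1"
    using x by simp
  moreover have "int (card ?N) + int (card I) = (\<Sum>i\<in>I. int (k i))"
    using card_points_joined[OF hs orth I x]
    by (metis of_nat_add of_nat_sum)
  ultimately show "(\<Sum>i\<in>I. int (k i)) - int (card I) \<le> int (card V) - 1"
    and "(\<Sum>i\<in>I. int (k i)) - int (card I) = int (card V) - 1 \<longleftrightarrow> V - {x} \<subseteq> \<Union>{B\<in>(\<Union>i\<in>I. P i). x \<in> B}"
    using le eq by linarith+
qed

theorem proposition1p10:
  fixes V :: "'a::{ab_group_add,finite} set"
    and v r :: nat and k :: "nat \<Rightarrow> nat" and P :: "nat \<Rightarrow> 'a set set"
  assumes "v \<ge> 3"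
    and "MOHS v V r k P"
  shows "(\<Sum>i<r. int (k i)) - int r \<le> int v - 1 \<and>
         ((\<Sum>i<r. int (k i)) - int r = int v - 1 \<longleftrightarrow> linear_space V (\<Union>i<r. P i))"
proof -
  have hs: "\<forall>i\<in>{..<r}. heffter_system V (k i) (P i)"
    and orth: "\<forall>i\<in>{..<r}. \<forall>j\<in>{..<r}. i \<noteq> j \<longrightarrow> orthogonal_hs (P i) (P j)"
    and "half_set V" "card (UNIV :: 'a set) = 2 * v + 1"
    using assms(2) unfolding MOHS_def by auto
  then have "card V = v"
    using card_half_set by fastforce
  with assms(1) obtain x0 where "x0 \<in> V"
    by fastforce
  note count = orthogonal_heffter_systems_point_count[OF hs orth finite_lessThan,
      unfolded card_lessThan \<open>card V = v\<close>]
  have "linear_space V (\<Union>i<r. P i) \<longleftrightarrow> (\<forall>x\<in>V. V - {x} \<subseteq> \<Union>{B\<in>(\<Union>i<r. P i). x \<in> B})"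
    using linear_space_iff_covering partial_linear_space_orthogonal_heffter_systems[OF hs orth] .
  with count(2) \<open>x0 \<in> V\<close> show ?thesis
    using count(1)[OF \<open>x0 \<in> V\<close>] by blast
qed

end
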